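(* Let $\boldsymbol\mu>\mathbf 0$ and let $\hat{\mathbf G},\tilde{\mathbf G}\in\mathcal G(\boldsymbol\mu)$ correspond to choices $(\hat k_1,\dots,\hat k_N)$ and $(\tilde k_1,\dots,\tilde k_N)$ that differ in exactly one index $i$ (i.e. $\hat k_i\neq\tilde k_i$ and $\hat k_j=\tilde k_j$ for $j\neq i$). Assume $\mathbf I-\hat{\mathbf G}$ and $\mathbf I-\tilde{\mathbf G}$ are irreducible and $\lambda(\mathbf I-\hat{\mathbf G})<1$, $\lambda(\mathbf I-\tilde{\mathbf G})<1$, and let $\hat{\mathbf p}=\hat{\mathbf G}^{-1}\mathbf n_{\hat{\mathbf G}}$, $\tilde{\mathbf p}=\tilde{\mathbf G}^{-1}\mathbf n_{\tilde{\mathbf G}}$. Then there exists $\mathbf p\in\{\hat{\mathbf p},\tilde{\mathbf p}\}$ such that $\hat{\mathbf G}\mathbf p\geq\mathbf n_{\hat{\mathbf G}}$ and $\tilde{\mathbf G}\mathbf p\geq\mathbf n_{\tilde{\mathbf G}}$.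
   Context: Multicast system: $N$ transmitters; transmitter $T_i$ has $K_i\geq1$ receivers $R_i^{k}$, $k\in\mathcal K_i=\{1,\dots,K_i\}$. Channel gains $g_{r_i^{k},t_j}\geq 0$ (from $T_j$ to $R_i^k$) with $g_{r_i^{k},t_i}>0$; noise variance $\sigma^2>0$. For $\boldsymbol\mu\in\mathbb R^N$, $\mathbf a_i^{k}(\boldsymbol\mu)\in\mathbb R^{1\times N}$ is the row vector with $i$-th entry $1$ and $j$-th entry $-\mu_i g_{r_i^{k},t_j}/g_{r_i^{k},t_i}$ for $j\neq i$; $n_i^{k}(\boldsymbol\mu)=\mu_i\sigma^2/g_{r_i^{k},t_i}$. $\mathcal G(\boldsymbol\mu)$ is the set of $N\times N$ matrices whose $i$-th row is $\mathbf a_i^{k_i}(\boldsymbol\mu)$ for a choice $k_i\in\mathcal K_i$ ($i=1,\dots,N$); for such $\mathbf G$, $\mathbf n_{\mathbf G}=(n_1^{k_1}(\boldsymbol\mu),\dots,n_N^{k_N}(\boldsymbol\mu))^T$. $\lambda(\cdot)$ is the Perron–Frobenius eigenvalue (spectral radius). Inequalities are componentwise. *)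

theory Defs
  imports "HOL-Analysis.Analysis"
begin

text \<open>Transmitters are indexed by a finite type 'n (so N = CARD('n)).
  Receiver k of transmitter i, for k in {1..K i}.  The gain from T_j to R_i^k is g i k j.\<close>

definition choice :: "('n \<Rightarrow> nat) \<Rightarrow> ('n \<Rightarrow> nat) \<Rightarrow> bool" where
  "choice K kc \<longleftrightarrow> (\<forall>i. kc i \<in> {1..K i})"

definition arow :: "('n \<Rightarrow> nat \<Rightarrow> 'n \<Rightarrow> real) \<Rightarrow> real^'n \<Rightarrow> 'n \<Rightarrow> nat \<Rightarrow> real^'n" where
  "arow g mu i k = (\<chi> j. if j = i then 1 else - (mu$i) * g i k j / g i k i)"

definition nval :: "real \<Rightarrow> ('n \<Rightarrow> nat \<Rightarrow> 'n \<Rightarrow> real) \<Rightarrow> real^'n \<Rightarrow> 'n \<Rightarrow> nat \<Rightarrow> real" where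
  "nval sigma2 g mu i k = mu$i * sigma2 / g i k i"

definition Gmat :: "('n \<Rightarrow> nat \<Rightarrow> 'n \<Rightarrow> real) \<Rightarrow> real^'n \<Rightarrow> ('n \<Rightarrow> nat) \<Rightarrow> real^'n^'n" where
  "Gmat g mu kc = (\<chi> i. arow g mu i (kc i))"

definition nvec :: "real \<Rightarrow> ('n \<Rightarrow> nat \<Rightarrow> 'n \<Rightarrow> real) \<Rightarrow> real^'n \<Rightarrow> ('n \<Rightarrow> nat) \<Rightarrow> real^'n" where
  "nvec sigma2 g mu kc = (\<chi> i. nval sigma2 g mu i (kc i))"

text \<open>Irreducibility: the directed graph of the matrix is strongly connected
  (standard equivalent of non-reducibility by permutation; 1x1 matrices are irreducible).\<close>
definition irreducible_mat :: "real^'n^'n \<Rightarrow> bool" where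
  "irreducible_mat A \<longleftrightarrow> (\<forall>i j. i \<noteq> j \<longrightarrow> (i, j) \<in> {(a, b). A$a$b \<noteq> 0}\<^sup>+)"

definition spectral_radius :: "real^'n^'n \<Rightarrow> real" where
  "spectral_radius A = Sup {cmod z | z. \<exists>v :: complex^'n. v \<noteq> 0 \<and>
      (\<chi> i j. complex_of_real (A$i$j)) *v v = z *s v}"

end

theory Submission imports Defs begin

text \<open>If \<open>B \<ge> 0\<close> entrywise and \<open>\<lambda>(B) < 1\<close>, then \<open>G = I - B\<close> is inverse-monotone:
  \<open>G x \<le> G y\<close> implies \<open>x \<le> y\<close>. Otherwise the negative part \<open>u \<noteq> 0\<close> of \<open>y - x\<close> satisfies
  \<open>B u \<ge> u\<close>, and Brouwer's theorem for \<open>v \<mapsto> B v / \<Sum>\<^sub>i (B v)\<^sub>i\<close> on the simplex vectors with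
  \<open>B v \<ge> v\<close> yields an eigenvector of \<open>B\<close> with eigenvalue at least 1.
  Now let \<open>G p = m\<close> and \<open>H q = n\<close> be two such systems that differ only in row \<open>i\<close>. If \<open>p\<close> is
  infeasible for \<open>H\<close> and \<open>q\<close> infeasible for \<open>G\<close>, both violations occur in row \<open>i\<close>, so
  \<open>G q \<le> G p\<close> and \<open>H p \<le> H q\<close>; inverse monotonicity gives \<open>p = q\<close>, a contradiction.\<close>

lemma bdd_above_eigenvalue_moduli:
  fixes A :: "real^'n^'n"
  shows "bdd_above {cmod z | z. \<exists>v :: complex^'n. v \<noteq> 0 \<and>
      (\<chi> i j. complex_of_real (A$i$j)) *v v = z *s v}"
proof -
  let ?M = "(\<chi> i j. complex_of_real (A$i$j)) :: complex^'n^'n"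
  have "bounded_linear ((*v) ?M)" by simp
  then obtain C where C: "\<And>x. norm (?M *v x) \<le> norm x * C"
    using bounded_linear.bounded by blast
  have norm_smult: "norm (z *s v) = cmod z * norm v" for z :: complex and v :: "complex^'n"
  proof -
    have "norm (z *s v) = L2_set (\<lambda>i. cmod z * norm (v$i)) UNIV"
      unfolding norm_vec_def by (simp add: vector_scalar_mult_def norm_mult)
    also have "\<dots> = cmod z * L2_set (\<lambda>i. norm (v$i)) UNIV"
      by (simp add: L2_set_right_distrib)
    finally show ?thesis by (simp add: norm_vec_def)
  qed
  show ?thesis
  proof (rule bdd_aboveI[of _ C], clarify)
    fix z :: complex and v :: "complex^'n"
    assume v: "v \<noteq> 0" and eig: "?M *v v = z *s v"
    have "cmod z * norm v \<le> norm v * C" using C[of v] eig norm_smult by simp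
    moreover have "norm v > 0" using v by simp
    ultimately show "cmod z \<le> C" by (simp add: mult.commute)
  qed
qed

lemma abs_real_eigenvalue_le_spectral_radius:
  fixes A :: "real^'n^'n" and v :: "real^'n"
  assumes "v \<noteq> 0" and "A *v v = s *s v"
  shows "\<bar>s\<bar> \<le> spectral_radius A"
proof -
  let ?vc = "(\<chi> i. complex_of_real (v$i)) :: complex^'n"
  have "?vc \<noteq> 0" using assms(1) by (auto simp: vec_eq_iff)
  moreover have "(\<chi> i j. complex_of_real (A$i$j)) *v ?vc = complex_of_real s *s ?vc"
  proof -
    have "(A *v v)$i = s * v$i" for i using assms(2) by (simp add: vector_scalar_mult_def)
    then show ?thesis
      by (auto simp: vec_eq_iff matrix_vector_mult_def vector_scalar_mult_def
          simp flip: of_real_mult of_real_sum)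
  qed
  ultimately have "cmod (complex_of_real s) \<in> {cmod z | z. \<exists>v :: complex^'n. v \<noteq> 0 \<and>
      (\<chi> i j. complex_of_real (A$i$j)) *v v = z *s v}" by blast
  then show ?thesis unfolding spectral_radius_def
    using cSup_upper[OF _ bdd_above_eigenvalue_moduli] by fastforce
qed

lemma nonneg_matrix_vector_mult_nonneg:
  fixes B :: "real^'n^'n"
  assumes "\<forall>i j. B$i$j \<ge> 0" and "\<forall>j. x$j \<ge> 0"
  shows "(B *v x)$i \<ge> 0"
  using assms by (auto simp: matrix_vector_mult_def intro!: sum_nonneg)

definition growth_simplex :: "real^'n^'n \<Rightarrow> (real^'n) set" where
  "growth_simplex B = {v. (\<forall>i. v$i \<ge> 0) \<and> (\<Sum>i\<in>UNIV. v$i) = 1 \<and> (\<forall>i. v$i \<le> (B *v v)$i)}"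

lemma compact_growth_simplex:
  fixes B :: "real^'n^'n"
  shows "compact (growth_simplex B)"
proof -
  have "growth_simplex B = (\<Inter>i. {v. v$i \<ge> 0}) \<inter> {v. (\<Sum>i\<in>UNIV. v$i) = 1}
      \<inter> (\<Inter>i. {v. (B *v v)$i - v$i \<ge> 0})"
    unfolding growth_simplex_def by auto
  moreover have "closed {v::real^'n. (\<Sum>i\<in>UNIV. v$i) = 1}"
    by (intro closed_Collect_eq continuous_intros)
  moreover have "closed {v::real^'n. v$i \<ge> 0}" for i
    by (intro closed_Collect_le continuous_intros)
  moreover have "closed {v. (B *v v)$i - v$i \<ge> 0}" for i
    unfolding matrix_vector_mult_def by (intro closed_Collect_le continuous_intros)
  ultimately have "closed (growth_simplex B)" by (auto intro!: closed_Int closed_INT)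
  moreover have "norm v \<le> 1" if "v \<in> growth_simplex B" for v
  proof -
    have "norm v \<le> (\<Sum>i\<in>UNIV. \<bar>v$i\<bar>)" by (rule norm_le_l1_cart)
    also have "\<dots> = 1" using that unfolding growth_simplex_def by simp
    finally show ?thesis .
  qed
  then have "bounded (growth_simplex B)" unfolding bounded_iff by blast
  ultimately show ?thesis using compact_eq_bounded_closed by blast
qed

lemma convex_growth_simplex:
  fixes B :: "real^'n^'n"
  shows "convex (growth_simplex B)"
proof (rule convexI)
  fix x y :: "real^'n" and a b :: real
  assume "x \<in> growth_simplex B" "y \<in> growth_simplex B" and ab: "0 \<le> a" "0 \<le> b" "a + b = 1"
  then have x: "\<forall>i. 0 \<le> x$i" "(\<Sum>i\<in>UNIV. x$i) = 1" "\<forall>i. x$i \<le> (B *v x)$i"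
    and y: "\<forall>i. 0 \<le> y$i" "(\<Sum>i\<in>UNIV. y$i) = 1" "\<forall>i. y$i \<le> (B *v y)$i"
    unfolding growth_simplex_def by auto
  have lin: "B *v (a *\<^sub>R x + b *\<^sub>R y) = a *\<^sub>R (B *v x) + b *\<^sub>R (B *v y)"
    by (simp add: matrix_vector_right_distrib matrix_vector_mult_scaleR)
  have "(\<Sum>i\<in>UNIV. a * x$i + b * y$i) = 1"
    using x y ab by (simp add: sum.distrib sum_distrib_left[symmetric])
  moreover have "a * x$i + b * y$i \<le> (B *v (a *\<^sub>R x + b *\<^sub>R y))$i" for i
    using x(3) y(3) ab lin by (simp add: add_mono mult_left_mono)
  moreover have "0 \<le> a * x$i + b * y$i" for i
    using x(1) y(1) ab by simp
  ultimately show "a *\<^sub>R x + b *\<^sub>R y \<in> growth_simplex B"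
    unfolding growth_simplex_def by simp
qed

lemma growth_simplex_nonempty:
  assumes u_nonneg: "\<forall>i. u$i \<ge> 0" and "u \<noteq> 0" and Bu: "\<forall>i. (B *v u)$i \<ge> u$i"
  shows "growth_simplex B \<noteq> {}"
proof -
  define c where "c = (\<Sum>i\<in>UNIV. u$i)"
  obtain k where "u$k \<noteq> 0" using \<open>u \<noteq> 0\<close> by (auto simp: vec_eq_iff)
  then have "u$k > 0" using u_nonneg by (metis less_eq_real_def)
  moreover have "c \<ge> u$k" unfolding c_def using u_nonneg by (intro member_le_sum) auto
  ultimately have c: "c > 0" by simp
  have "(1/c) *\<^sub>R u \<in> growth_simplex B" unfolding growth_simplex_def using c u_nonneg Bu
    by (auto simp: matrix_vector_mult_scaleR sum_divide_distrib[symmetric] c_def divide_right_mono)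
  then show ?thesis by blast
qed

lemma growth_simplex_sum_ge_one:
  assumes "v \<in> growth_simplex B"
  shows "(\<Sum>i\<in>UNIV. (B *v v)$i) \<ge> 1"
proof -
  have "(\<Sum>i\<in>UNIV. v$i) \<le> (\<Sum>i\<in>UNIV. (B *v v)$i)"
    using assms unfolding growth_simplex_def by (intro sum_mono) auto
  then show ?thesis using assms unfolding growth_simplex_def by simp
qed

lemma normalized_image_in_growth_simplex:
  fixes B :: "real^'n^'n"
  assumes B_nonneg: "\<forall>i j. B$i$j \<ge> 0" and v: "v \<in> growth_simplex B"
  shows "(1 / (\<Sum>i\<in>UNIV. (B *v v)$i)) *\<^sub>R (B *v v) \<in> growth_simplex B"
proof -
  define s where "s = (\<Sum>i\<in>UNIV. (B *v v)$i)"
  have s: "s \<ge> 1" using growth_simplex_sum_ge_one[OF v] s_def by simp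
  have Bv_nonneg: "\<forall>i. (B *v v)$i \<ge> 0"
    using v B_nonneg nonneg_matrix_vector_mult_nonneg unfolding growth_simplex_def by blast
  have "(B *v (B *v v - v))$i \<ge> 0" for i
    using v B_nonneg by (intro nonneg_matrix_vector_mult_nonneg) (auto simp: growth_simplex_def)
  then have BBv: "(B *v (B *v v))$i \<ge> (B *v v)$i" for i
    by (simp add: matrix_vector_mult_diff_distrib)
  show ?thesis unfolding growth_simplex_def s_def[symmetric] using s Bv_nonneg BBv
    by (auto simp: matrix_vector_mult_scaleR sum_divide_distrib[symmetric] s_def divide_right_mono)
qed

lemma nonneg_matrix_eigenvalue_ge_one:
  fixes B :: "real^'n^'n" and u :: "real^'n"
  assumes B_nonneg: "\<forall>i j. B$i$j \<ge> 0"
    and "\<forall>i. u$i \<ge> 0" and "u \<noteq> 0" and "\<forall>i. (B *v u)$i \<ge> u$i"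
  obtains v s where "v \<noteq> 0" and "s \<ge> 1" and "B *v v = s *s v"
proof -
  let ?S = "growth_simplex B"
  define f where "f v = (1 / (\<Sum>i\<in>UNIV. (B *v v)$i)) *\<^sub>R (B *v v)" for v
  have "continuous_on ?S f"
    using growth_simplex_sum_ge_one unfolding f_def matrix_vector_mult_def
    by (intro continuous_intros) force
  moreover have "f \<in> ?S \<rightarrow> ?S"
    using normalized_image_in_growth_simplex[OF B_nonneg] unfolding f_def by blast
  ultimately obtain v where v: "v \<in> ?S" "f v = v"
    using brouwer[OF compact_growth_simplex convex_growth_simplex
        growth_simplex_nonempty[OF assms(2-4)]] by blast
  define s where "s = (\<Sum>i\<in>UNIV. (B *v v)$i)"
  have s: "s \<ge> 1" using growth_simplex_sum_ge_one[OF v(1)] s_def by simp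
  have "B *v v = s *\<^sub>R ((1/s) *\<^sub>R (B *v v))" using s by simp
  also have "\<dots> = s *\<^sub>R v" using v(2) unfolding f_def s_def by simp
  finally have "B *v v = s *s v" by (simp add: scalar_mult_eq_scaleR)
  moreover have "v \<noteq> 0" using v(1) unfolding growth_simplex_def by auto
  ultimately show ?thesis using s that by blast
qed

lemma nonneg_matrix_spectral_radius_ge_one:
  fixes B :: "real^'n^'n" and u :: "real^'n"
  assumes "\<forall>i j. B$i$j \<ge> 0"
    and "\<forall>i. u$i \<ge> 0" and "u \<noteq> 0" and "\<forall>i. (B *v u)$i \<ge> u$i"
  shows "spectral_radius B \<ge> 1"
proof -
  obtain v s where "v \<noteq> 0" "s \<ge> 1" "B *v v = s *s v"
    using nonneg_matrix_eigenvalue_ge_one[OF assms] .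
  then show ?thesis using abs_real_eigenvalue_le_spectral_radius by fastforce
qed

definition inverse_monotone :: "real^'n^'n \<Rightarrow> bool" where
  "inverse_monotone G \<longleftrightarrow>
     (\<forall>x y. (\<forall>i. (G *v x)$i \<le> (G *v y)$i) \<longrightarrow> (\<forall>i. x$i \<le> y$i))"

lemma inverse_monotone_I_minus_nonneg:
  fixes B :: "real^'n^'n"
  assumes B_nonneg: "\<forall>i j. B$i$j \<ge> 0" and rad: "spectral_radius B < 1"
  shows "inverse_monotone (mat 1 - B)"
  unfolding inverse_monotone_def
proof (rule allI, rule allI, rule impI)
  fix x y :: "real^'n"
  assume le: "\<forall>i. ((mat 1 - B) *v x)$i \<le> ((mat 1 - B) *v y)$i"
  define d where "d = y - x"
  have d: "d$i - (B *v d)$i \<ge> 0" for i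
    using le[rule_format, of i]
    by (simp add: d_def matrix_vector_mult_diff_distrib matrix_vector_mult_diff_rdistrib)
  define u where "u = (\<chi> i. max (- d$i) 0)"
  have u_nonneg: "\<forall>i. u$i \<ge> 0" unfolding u_def by simp
  have Bu: "\<forall>i. (B *v u)$i \<ge> u$i"
  proof
    fix i
    have "(\<Sum>j\<in>UNIV. B$i$j * (- u$j)) \<le> (\<Sum>j\<in>UNIV. B$i$j * d$j)"
      using B_nonneg by (intro sum_mono mult_left_mono) (auto simp: u_def)
    then have "(B *v d)$i \<ge> - (B *v u)$i" by (simp add: matrix_vector_mult_def sum_negf)
    moreover have "(B *v u)$i \<ge> 0"
      using B_nonneg u_nonneg by (rule nonneg_matrix_vector_mult_nonneg)
    ultimately show "(B *v u)$i \<ge> u$i" using d[of i] unfolding u_def by auto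
  qed
  have "u = 0"
    using nonneg_matrix_spectral_radius_ge_one[OF B_nonneg u_nonneg _ Bu] rad by fastforce
  then show "\<forall>i. x$i \<le> y$i" by (auto simp: u_def d_def vec_eq_iff max_def split: if_splits)
qed

lemma inverse_monotone_invertible:
  assumes mono: "inverse_monotone G"
  shows "invertible G"
proof -
  have "x = 0" if "G *v x = 0" for x
  proof -
    have "\<forall>i. (G *v x)$i \<le> (G *v 0)$i" "\<forall>i. (G *v 0)$i \<le> (G *v x)$i"
      using that by simp_all
    then have "\<forall>i. x$i \<le> 0$i" "\<forall>i. 0$i \<le> x$i"
      using mono unfolding inverse_monotone_def by blast+
    then show "x = 0" by (simp add: vec_eq_iff order.antisym)
  qed
  then show ?thesis using matrix_left_invertible_ker invertible_left_inverse by blast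
qed

lemma invertible_matrix_inv_solves:
  assumes "invertible G"
  shows "G *v (matrix_inv G *v n) = n"
proof -
  have "G ** matrix_inv G = mat 1"
    using assms unfolding invertible_def matrix_inv_def by (rule someI_ex[THEN conjunct1])
  then show ?thesis by (metis matrix_vector_mul_assoc matrix_vector_mul_lid)
qed

lemma one_row_exchange_feasible:
  fixes G H :: "real^'n^'n"
  assumes G_mono: "inverse_monotone G" and H_mono: "inverse_monotone H"
    and rows: "\<And>j. j \<noteq> i0 \<Longrightarrow> row j G = row j H"
    and entries: "\<And>j. j \<noteq> i0 \<Longrightarrow> m$j = n$j"
    and p: "G *v p = m" and q: "H *v q = n"
  shows "(\<forall>j. (H *v p)$j \<ge> n$j) \<or> (\<forall>j. (G *v q)$j \<ge> m$j)"
proof (rule ccontr)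
  have same_rows: "(G *v x)$j = (H *v x)$j" if "j \<noteq> i0" for x j
    using rows[OF that] by (simp add: matrix_vector_mult_def row_def vec_eq_iff)
  have Hp: "(H *v p)$j = n$j" and Gq: "(G *v q)$j = m$j" if "j \<noteq> i0" for j
    using same_rows[OF that] entries[OF that] p q by auto
  assume "\<not> ?thesis"
  then obtain j k where j: "(H *v p)$j < n$j" and k: "(G *v q)$k < m$k"
    by (auto simp: not_le)
  have "j = i0" using j Hp by force
  have "k = i0" using k Gq by force
  have "(G *v q)$i \<le> (G *v p)$i" for i
    using k \<open>k = i0\<close> Gq p by (cases "i = i0") auto
  then have "\<forall>i. q$i \<le> p$i" using G_mono unfolding inverse_monotone_def by blast
  moreover have "(H *v p)$i \<le> (H *v q)$i" for i
    using j \<open>j = i0\<close> Hp q by (cases "i = i0") auto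
  then have "\<forall>i. p$i \<le> q$i" using H_mono unfolding inverse_monotone_def by blast
  ultimately have "p = q" by (simp add: vec_eq_iff order.antisym)
  then show False using j q by simp
qed

lemma I_minus_Gmat_nonneg:
  assumes g_nonneg: "\<forall>i k j. k \<in> {1..K i} \<longrightarrow> g i k j \<ge> 0"
    and g_pos: "\<forall>i k. k \<in> {1..K i} \<longrightarrow> g i k i > 0"
    and mu_pos: "\<forall>i. mu$i > 0" and ch: "choice K kc"
  shows "\<forall>i j. (mat 1 - Gmat g mu kc)$i$j \<ge> 0"
proof (intro allI)
  fix i j
  have k: "kc i \<in> {1..K i}" using ch unfolding choice_def by blast
  have "mu$i * g i (kc i) j / g i (kc i) i \<ge> 0"
    using g_nonneg g_pos mu_pos k by (meson divide_nonneg_pos less_eq_real_def mult_nonneg_nonneg)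
  then show "(mat 1 - Gmat g mu kc)$i$j \<ge> 0"
    by (auto simp: Gmat_def arow_def mat_def)
qed

lemma inverse_monotone_Gmat:
  assumes "\<forall>i k j. k \<in> {1..K i} \<longrightarrow> g i k j \<ge> 0"
    and "\<forall>i k. k \<in> {1..K i} \<longrightarrow> g i k i > 0"
    and "\<forall>i. mu$i > 0" and "choice K kc"
    and "spectral_radius (mat 1 - Gmat g mu kc) < 1"
  shows "inverse_monotone (Gmat g mu kc)"
  using inverse_monotone_I_minus_nonneg[OF I_minus_Gmat_nonneg[OF assms(1-4)] assms(5)]
  by simp

theorem lemma2:
  fixes K :: "'n::finite \<Rightarrow> nat" and g :: "'n \<Rightarrow> nat \<Rightarrow> 'n \<Rightarrow> real"
    and sigma2 :: real and mu :: "real^'n" and khat ktil :: "'n \<Rightarrow> nat"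
  assumes K_pos: "\<forall>i. K i \<ge> 1"
    and g_nonneg: "\<forall>i k j. k \<in> {1..K i} \<longrightarrow> g i k j \<ge> 0"
    and g_pos: "\<forall>i k. k \<in> {1..K i} \<longrightarrow> g i k i > 0"
    and sigma_pos: "sigma2 > 0"
    and mu_pos: "\<forall>i. mu$i > 0"
    and ch_hat: "choice K khat" and ch_til: "choice K ktil"
    and differ: "\<exists>i. khat i \<noteq> ktil i \<and> (\<forall>j. j \<noteq> i \<longrightarrow> khat j = ktil j)"
    and irr_hat: "irreducible_mat (mat 1 - Gmat g mu khat)"
    and irr_til: "irreducible_mat (mat 1 - Gmat g mu ktil)"
    and rad_hat: "spectral_radius (mat 1 - Gmat g mu khat) < 1"
    and rad_til: "spectral_radius (mat 1 - Gmat g mu ktil) < 1"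
  shows "\<exists>p \<in> {matrix_inv (Gmat g mu khat) *v nvec sigma2 g mu khat,
               matrix_inv (Gmat g mu ktil) *v nvec sigma2 g mu ktil}.
           (\<forall>j. (Gmat g mu khat *v p)$j \<ge> (nvec sigma2 g mu khat)$j) \<and>
           (\<forall>j. (Gmat g mu ktil *v p)$j \<ge> (nvec sigma2 g mu ktil)$j)"
proof -
  obtain i0 where i0: "\<forall>j. j \<noteq> i0 \<longrightarrow> khat j = ktil j" using differ by blast
  let ?Gh = "Gmat g mu khat" and ?Gt = "Gmat g mu ktil"
  let ?nh = "nvec sigma2 g mu khat" and ?nt = "nvec sigma2 g mu ktil"
  let ?ph = "matrix_inv ?Gh *v ?nh" and ?pt = "matrix_inv ?Gt *v ?nt"
  have mono_h: "inverse_monotone ?Gh"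
    using inverse_monotone_Gmat[OF g_nonneg g_pos mu_pos ch_hat rad_hat] .
  have mono_t: "inverse_monotone ?Gt"
    using inverse_monotone_Gmat[OF g_nonneg g_pos mu_pos ch_til rad_til] .
  have "(\<forall>j. (?Gt *v ?ph)$j \<ge> ?nt$j) \<or> (\<forall>j. (?Gh *v ?pt)$j \<ge> ?nh$j)"
  proof (rule one_row_exchange_feasible[OF mono_h mono_t])
    show "row j ?Gh = row j ?Gt" "?nh$j = ?nt$j" if "j \<noteq> i0" for j
      using i0 that by (simp_all add: row_def Gmat_def nvec_def)
    show "?Gh *v ?ph = ?nh" "?Gt *v ?pt = ?nt"
      using invertible_matrix_inv_solves inverse_monotone_invertible mono_h mono_t by blast+
  qed
  moreover have "?Gh *v ?ph = ?nh" "?Gt *v ?pt = ?nt"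
    using invertible_matrix_inv_solves inverse_monotone_invertible mono_h mono_t by blast+
  ultimately show ?thesis by auto
qed

end
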